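(* Let \[P=\{x\in[0,2]^2 : 2x_1+x_2\le 5,\ -2x_1+3x_2\le 3\}\subseteq\mathbb{R}^2,\] with both variables integer, and let \[P_L=\{(x,z)\in\mathbb{R}^2\times[0,1]^4 : x\in P,\ x_i=z_{i1}+2z_{i2}\text{ for } i=1,2\},\] where $z=(z_{11},z_{12},z_{21},z_{22})$ and all six variables of $P_L$ are integer variables. Then \[\operatorname{proj}_x\big(\mathrm{SC}(P_L)\big)\subsetneq \mathrm{SC}(P).\]
   Context: Split sets and split closure. For $(\pi,\pi_0)\in\mathbb{Z}^n\times\mathbb{Z}$, the split set is $S(\pi,\pi_0)=\{x\in\mathbb{R}^n:\pi_0<\pi^Tx<\pi_0+1\}$. Let $J\subseteq\{1,\dots,n\}$ be the index set of integer variables, and let $\mathcal{S}_n(J)$ be the family of split sets $S(\pi,\pi_0)$ with $\pi\in\mathbb{Z}^n$, $\pi_j=0$ for $j\notin J$, and $\pi_0\in\mathbb{Z}$. For $X\subseteq\mathbb{R}^n$, the split closure is $\mathrm{SC}(X,J)=\bigcap_{S\in\mathcal{S}_n(J)}\mathrm{conv}(X\setminus S)$. Here $\mathrm{SC}(P)$ means $\mathrm{SC}(P,\{1,2\})$, and $\mathrm{SC}(P_L)$ means the split closure of $P_L$ with all six coordinates integer. $\operatorname{proj}_x$ denotes orthogonal projection onto the $x$-coordinates. *)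

theory Defs
  imports "HOL-Analysis.Analysis"
begin

definition split_set :: "int ^ 'n \<Rightarrow> int \<Rightarrow> (real ^ 'n::finite) set" where
  "split_set \<pi> \<pi>0 = {x. real_of_int \<pi>0 < (\<Sum>i\<in>UNIV. real_of_int (\<pi> $ i) * x $ i)
                        \<and> (\<Sum>i\<in>UNIV. real_of_int (\<pi> $ i) * x $ i) < real_of_int \<pi>0 + 1}"

definition split_closure :: "(real ^ 'n::finite) set \<Rightarrow> 'n set \<Rightarrow> (real ^ 'n) set" where
  "split_closure X J = (\<Inter> {convex hull (X - split_set \<pi> \<pi>0) | \<pi> \<pi>0.
                              \<forall>j. j \<notin> J \<longrightarrow> \<pi> $ j = 0})"

definition P :: "(real ^ 2) set" where
  "P = {x. 0 \<le> x $ 1 \<and> x $ 1 \<le> 2 \<and> 0 \<le> x $ 2 \<and> x $ 2 \<le> 2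
          \<and> 2 * x $ 1 + x $ 2 \<le> 5 \<and> -2 * x $ 1 + 3 * x $ 2 \<le> 3}"

text \<open>The lifted polytope P_L in R^6, coordinates
  (x1,x2,z11,z12,z21,z22) = (y$1,y$2,y$3,y$4,y$5,y$6).\<close>
definition P_L :: "(real ^ 6) set" where
  "P_L = {y. (\<chi> i. if i = 1 then y $ 1 else y $ 2 :: real ^ 2) \<in> P
           \<and> (\<forall>k\<in>{3,4,5,6::6}. 0 \<le> y $ k \<and> y $ k \<le> 1)
           \<and> y $ 1 = y $ 3 + 2 * y $ 4
           \<and> y $ 2 = y $ 5 + 2 * y $ 6}"

definition proj_x :: "real ^ 6 \<Rightarrow> real ^ 2" where
  "proj_x y = (\<chi> i. if i = 1 then y $ 1 else y $ 2)"

end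

(*
  Every split of R^2 pulls back along proj_x to a split of R^6 supported on the x-coordinates,
  and convex hulls commute with the linear map proj_x; hence proj_x maps SC(P_L) into SC(P).
  The inclusion is strict at (1, 4/3): every split containing this point misses a segment or
  triangle of points of P whose convex hull contains it, so it lies in SC(P), while in the
  lifted space the splits on the binary variables z12, z22 and on z12 - z22 cut off all its lifts.
*)
theory Submission
  imports Defs
begin

lemma exhaust_6:
  fixes x :: 6
  shows "x = 1 \<or> x = 2 \<or> x = 3 \<or> x = 4 \<or> x = 5 \<or> x = 6"
proof (induct x)
  case (of_int z)
  then have "z = 0 \<or> z = 1 \<or> z = 2 \<or> z = 3 \<or> z = 4 \<or> z = 5" by fastforce
  then show ?case by auto
qed

lemma UNIV_6: "UNIV = {1, 2, 3, 4, 5, 6::6}"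
  using exhaust_6 by auto

lemma sum_6: "sum f (UNIV::6 set) = f 1 + f 2 + f 3 + f 4 + f 5 + f 6"
  unfolding UNIV_6 by (simp add: ac_simps)

lemma split_closureI:
  assumes "\<And>\<pi> \<pi>0. \<forall>j. j \<notin> J \<longrightarrow> \<pi> $ j = 0 \<Longrightarrow> x \<in> convex hull (X - split_set \<pi> \<pi>0)"
  shows "x \<in> split_closure X J"
  using assms unfolding split_closure_def by blast

lemma split_closureD:
  assumes "x \<in> split_closure X J" and "\<forall>j. j \<notin> J \<longrightarrow> \<pi> $ j = 0"
  shows "x \<in> convex hull (X - split_set \<pi> \<pi>0)"
  using assms unfolding split_closure_def by blast

lemma split_closure_valid_inequality:
  fixes c :: "real ^ 'n::finite"
  assumes "\<forall>j. j \<notin> J \<longrightarrow> \<pi> $ j = 0"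
    and "\<And>z. z \<in> X - split_set \<pi> \<pi>0 \<Longrightarrow> c \<bullet> z \<le> d"
    and "y \<in> split_closure X J"
  shows "c \<bullet> y \<le> d"
proof -
  have "convex hull (X - split_set \<pi> \<pi>0) \<subseteq> {z. c \<bullet> z \<le> d}"
    using assms(2) by (intro hull_minimal convex_halfspace_le) blast
  then show ?thesis using split_closureD[OF assms(3,1)] by blast
qed

lemma split_closure_linear_image_subset:
  fixes f :: "real ^ 'm::finite \<Rightarrow> real ^ 'n::finite"
  assumes "linear f" and "f ` X \<subseteq> Y"
    and "\<And>\<pi>. \<exists>\<pi>'. \<forall>\<pi>0 y. y \<in> split_set \<pi>' \<pi>0 \<longleftrightarrow> f y \<in> split_set \<pi> \<pi>0"
  shows "f ` split_closure X UNIV \<subseteq> split_closure Y UNIV"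
proof clarify
  fix y assume y: "y \<in> split_closure X UNIV"
  show "f y \<in> split_closure Y UNIV"
  proof (rule split_closureI)
    fix \<pi> :: "int ^ 'n" and \<pi>0
    obtain \<pi>' where \<pi>': "\<And>z. z \<in> split_set \<pi>' \<pi>0 \<longleftrightarrow> f z \<in> split_set \<pi> \<pi>0"
      using assms(3) by blast
    have "f y \<in> f ` (convex hull (X - split_set \<pi>' \<pi>0))"
      using split_closureD[OF y] by blast
    also have "\<dots> = convex hull (f ` (X - split_set \<pi>' \<pi>0))"
      by (rule convex_hull_linear_image[OF assms(1)])
    also have "\<dots> \<subseteq> convex hull (Y - split_set \<pi> \<pi>0)"
      using assms(2) \<pi>' by (intro hull_mono) blast
    finally show "f y \<in> convex hull (Y - split_set \<pi> \<pi>0)" .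
  qed
qed

lemma mem_convex_hull_triangle:
  assumes "a \<in> X" "b \<in> X" "c \<in> X" "0 \<le> u" "0 \<le> v" "0 \<le> w" "u + v + w = 1"
  shows "u *\<^sub>R a + v *\<^sub>R b + w *\<^sub>R c \<in> convex hull X"
proof -
  have "u *\<^sub>R a + v *\<^sub>R b + w *\<^sub>R c \<in> convex hull {a, b, c}"
    unfolding convex_hull_3 using assms(4-7) by blast
  also have "\<dots> \<subseteq> convex hull X"
    using assms(1-3) by (intro hull_mono) auto
  finally show ?thesis .
qed

lemma linear_proj_x: "linear proj_x"
  by (rule linearI) (auto simp: proj_x_def vec_eq_iff)

lemma proj_x_nth [simp]: "proj_x y $ 1 = y $ 1" "proj_x y $ 2 = y $ 2"
  by (simp_all add: proj_x_def)

lemma proj_x_P_L_subset: "proj_x ` P_L \<subseteq> P"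
  by (auto simp: P_L_def proj_x_def)

lemma split_set_2_iff:
  "(x :: real ^ 2) \<in> split_set \<pi> \<pi>0 \<longleftrightarrow>
     of_int \<pi>0 < of_int (\<pi> $ 1) * x $ 1 + of_int (\<pi> $ 2) * x $ 2 \<and>
     of_int (\<pi> $ 1) * x $ 1 + of_int (\<pi> $ 2) * x $ 2 < of_int \<pi>0 + 1"
  by (simp add: split_set_def sum_2)

lemma proj_x_split_closure_subset: "proj_x ` split_closure P_L UNIV \<subseteq> split_closure P UNIV"
proof (rule split_closure_linear_image_subset[OF linear_proj_x proj_x_P_L_subset])
  fix \<pi> :: "int ^ 2"
  define \<pi>' :: "int ^ 6" where "\<pi>' = (\<chi> i. if i = 1 then \<pi> $ 1 else if i = 2 then \<pi> $ 2 else 0)"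
  have "y \<in> split_set \<pi>' \<pi>0 \<longleftrightarrow> proj_x y \<in> split_set \<pi> \<pi>0" for y \<pi>0
    by (simp add: split_set_def sum_2 sum_6 \<pi>'_def)
  then show "\<exists>\<pi>'. \<forall>\<pi>0 y. y \<in> split_set \<pi>' \<pi>0 \<longleftrightarrow> proj_x y \<in> split_set \<pi> \<pi>0" by blast
qed

abbreviation sixths :: "int \<Rightarrow> int \<Rightarrow> real ^ 2" where
  "sixths u w \<equiv> vector [of_int u / 6, of_int w / 6]"

lemma sixths_in_split_set_iff:
  "sixths u w \<in> split_set \<pi> \<pi>0 \<longleftrightarrow>
     6 * \<pi>0 < \<pi> $ 1 * u + \<pi> $ 2 * w \<and> \<pi> $ 1 * u + \<pi> $ 2 * w < 6 * \<pi>0 + 6"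
proof -
  have "of_int (\<pi> $ 1) * (of_int u / 6) + of_int (\<pi> $ 2) * (of_int w / 6)
        = (of_int (\<pi> $ 1 * u + \<pi> $ 2 * w) :: real) / 6"
    by (simp add: field_simps)
  then have "sixths u w \<in> split_set \<pi> \<pi>0 \<longleftrightarrow>
     of_int (6 * \<pi>0) < (of_int (\<pi> $ 1 * u + \<pi> $ 2 * w) :: real) \<and>
     of_int (\<pi> $ 1 * u + \<pi> $ 2 * w) < (of_int (6 * \<pi>0 + 6) :: real)"
    unfolding split_set_2_iff vector_2 by (simp add: field_simps)
  then show ?thesis by (simp only: of_int_less_iff)
qed

lemma splits_containing_one_four_thirds_cases:
  fixes p q \<pi>0 :: int
  assumes bounds: "3 * \<pi>0 + 1 \<le> 3 * p + 4 * q" "3 * p + 4 * q \<le> 3 * \<pi>0 + 2"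
  obtains "q \<ge> 2 \<or> q \<le> -2"
    | "q = 1 \<and> p = \<pi>0 - 1 \<and> \<pi>0 \<noteq> 0 \<or> q = -1 \<and> p = \<pi>0 + 2 \<and> \<pi>0 \<noteq> -1"
    | "q = 1 \<and> p = -1 \<and> \<pi>0 = 0 \<or> q = -1 \<and> p = 1 \<and> \<pi>0 = -1"
proof -
  have "q \<noteq> 0" using bounds by presburger
  moreover have "q = 1 \<Longrightarrow> p = \<pi>0 - 1" "q = -1 \<Longrightarrow> p = \<pi>0 + 2"
    using bounds by presburger+
  ultimately consider "q \<ge> 2 \<or> q \<le> -2" | "q = 1" "p = \<pi>0 - 1" | "q = -1" "p = \<pi>0 + 2"
    by fastforce
  then show thesis
    by cases (use that in \<open>fastforce+\<close>)
qed

lemma sixths_eq_combination_iff: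
  "sixths d1 d2 = u *\<^sub>R sixths a1 a2 + v *\<^sub>R sixths b1 b2 + w *\<^sub>R sixths c1 c2
   \<longleftrightarrow> d1 = u * a1 + v * b1 + w * c1 \<and> d2 = u * a2 + v * b2 + w * c2"
  by (auto simp: vec_eq_iff forall_2 field_simps)

lemma one_four_thirds_in_convex_hull_P_minus_split:
  assumes "sixths 6 8 \<in> split_set \<pi> \<pi>0"
  shows "sixths 6 8 \<in> convex hull (P - split_set \<pi> \<pi>0)"
proof -
  define p q where "p = \<pi> $ 1" and "q = \<pi> $ 2"
  have outside: "sixths u w \<in> P - split_set \<pi> \<pi>0"
    if "sixths u w \<in> P" "p * u + q * w \<le> 6 * \<pi>0 \<or> p * u + q * w \<ge> 6 * \<pi>0 + 6" for u w
    using that sixths_in_split_set_iff[of u w \<pi> \<pi>0] unfolding p_def q_def by auto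
  have in_P: "sixths 6 6 \<in> P" "sixths 6 10 \<in> P" "sixths 0 6 \<in> P" "sixths 12 6 \<in> P"
    "sixths 9 12 \<in> P" "sixths 10 10 \<in> P"
    by (simp_all add: P_def)
  have "6 * \<pi>0 < p * 6 + q * 8" "p * 6 + q * 8 < 6 * \<pi>0 + 6"
    using assms unfolding sixths_in_split_set_iff p_def q_def by simp_all
  then have bounds: "3 * \<pi>0 + 1 \<le> 3 * p + 4 * q" "3 * p + 4 * q \<le> 3 * \<pi>0 + 2"
    by linarith+
  then show ?thesis
  proof (cases rule: splits_containing_one_four_thirds_cases)
    case 1
    have "sixths 6 6 \<in> P - split_set \<pi> \<pi>0" "sixths 6 10 \<in> P - split_set \<pi> \<pi>0"
      using 1 bounds by (intro outside in_P; arith)+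
    moreover have "sixths 6 8 = (1/2) *\<^sub>R sixths 6 6 + (1/2) *\<^sub>R sixths 6 10 + 0 *\<^sub>R sixths 6 6"
      by (simp only: sixths_eq_combination_iff) simp
    ultimately show ?thesis
      using mem_convex_hull_triangle[of _ "P - split_set \<pi> \<pi>0" _ _ "1/2" "1/2" 0] by simp
  next
    case 2
    have "sixths 0 6 \<in> P - split_set \<pi> \<pi>0" "sixths 12 6 \<in> P - split_set \<pi> \<pi>0"
      "sixths 9 12 \<in> P - split_set \<pi> \<pi>0"
      using 2 bounds by (intro outside in_P; arith)+
    moreover have
      "sixths 6 8 = (5/12) *\<^sub>R sixths 0 6 + (1/4) *\<^sub>R sixths 12 6 + (1/3) *\<^sub>R sixths 9 12"
      by (simp only: sixths_eq_combination_iff) simp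
    ultimately show ?thesis
      using mem_convex_hull_triangle[of _ "P - split_set \<pi> \<pi>0" _ _ "5/12" "1/4" "1/3"] by simp
  next
    case 3
    have "sixths 0 6 \<in> P - split_set \<pi> \<pi>0" "sixths 6 6 \<in> P - split_set \<pi> \<pi>0"
      "sixths 10 10 \<in> P - split_set \<pi> \<pi>0"
      using 3 bounds by (intro outside in_P; arith)+
    moreover have
      "sixths 6 8 = (1/3) *\<^sub>R sixths 0 6 + (1/6) *\<^sub>R sixths 6 6 + (1/2) *\<^sub>R sixths 10 10"
      by (simp only: sixths_eq_combination_iff) simp
    ultimately show ?thesis
      using mem_convex_hull_triangle[of _ "P - split_set \<pi> \<pi>0" _ _ "1/3" "1/6" "1/2"] by simp
  qed
qed

lemma one_four_thirds_in_split_closure_P: "sixths 6 8 \<in> split_closure P UNIV"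
proof (rule split_closureI)
  fix \<pi> :: "int ^ 2" and \<pi>0
  have "sixths 6 8 \<in> P"
    by (simp add: P_def)
  then show "sixths 6 8 \<in> convex hull (P - split_set \<pi> \<pi>0)"
    using one_four_thirds_in_convex_hull_P_minus_split hull_inc[of _ "P - split_set \<pi> \<pi>0"]
    by (cases "sixths 6 8 \<in> split_set \<pi> \<pi>0") blast+
qed

text \<open>The splits on z22, on z12 and on z12 - z22 yield valid inequalities for SC(P_L) that force
  z22 \<ge> 1/3, z12 \<le> 1/4 and z22 \<le> z12 above the point (1, 4/3).\<close>
lemma one_four_thirds_notin_proj_x_split_closure_P_L:
  "sixths 6 8 \<notin> proj_x ` split_closure P_L UNIV"
proof
  assume "sixths 6 8 \<in> proj_x ` split_closure P_L UNIV"
  then obtain y where y: "y \<in> split_closure P_L UNIV" "y $ 1 = 1" "y $ 2 = 4/3"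
    by (auto simp: vec_eq_iff forall_2)
  have "(\<chi> i. if i = 2 then 1 else if i = 6 then -1 else 0) \<bullet> y \<le> (1::real)"
    by (rule split_closure_valid_inequality[of UNIV "\<chi> i. if i = 6 then 1 else 0" P_L 0,
          OF _ _ y(1)]) (auto simp: P_L_def P_def split_set_def sum_6 inner_vec_def)
  moreover have "(\<chi> i. if i = 1 then -2 else if i = 2 then 3 else if i = 4 then 4 else 0) \<bullet> y
      \<le> (3::real)"
    by (rule split_closure_valid_inequality[of UNIV "\<chi> i. if i = 4 then 1 else 0" P_L 0,
          OF _ _ y(1)]) (auto simp: P_L_def P_def split_set_def sum_6 inner_vec_def)
  moreover have "(\<chi> i. if i = 4 then -1 else if i = 6 then 1 else 0) \<bullet> y \<le> (0::real)"
    by (rule split_closure_valid_inequality[of UNIV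
          "\<chi> i. if i = 4 then 1 else if i = 6 then -1 else 0" P_L "-1", OF _ _ y(1)])
      (auto simp: P_L_def P_def split_set_def sum_6 inner_vec_def)
  ultimately show False
    using y(2,3) by (simp add: inner_vec_def sum_6)
qed

theorem theorem1:
  shows "proj_x ` split_closure P_L UNIV \<subset> split_closure P UNIV"
  using proj_x_split_closure_subset one_four_thirds_in_split_closure_P
    one_four_thirds_notin_proj_x_split_closure_P_L
  by blast

end
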